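(* Let $G$ be the $2$-coloured collection consisting of the eight arity-$2$ elements $(c;d_1d_2)$, $c,d_1,d_2\in\{1,2\}$, of $\mathrm{Bulle}$, with their colours. Then $\mathrm{Bulle}$ admits the presentation $(G,\leftrightarrow)$, where $\leftrightarrow$ is the following equivalence relation on coloured syntax trees of degree $2$ on $G$. For each $(c;d_1d_2d_3)$ with $c,d_1,d_2,d_3\in\{1,2\}$, the four trees $$\mathfrak c(c;e\,d_3)\circ_1\mathfrak c(e;d_1d_2)\quad\text{and}\quad\mathfrak c(c;d_1e)\circ_2\mathfrak c(e;d_2d_3),\qquad e\in\{1,2\},$$ are pairwise equivalent. This gives sixteen classes, of four trees each, and these are all the nontrivial relations. That is, two degree-$2$ trees are related iff they evaluate to the same element of $\mathrm{Bulle}$. Consequently, $\mathrm{Bulle}$ is isomorphic to $\mathcal F(G)/\!\equiv$, where $\equiv$ is the smallest coloured operadic congruence containing $\leftrightarrow$, via the morphism sending $\mathfrak c(g)$ to $g$.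
   Context: The $2$-coloured operad $\mathrm{Bulle}$ has as elements of arity $n\ge2$ (bubbles) the pairs $(c;d_1\cdots d_n)$ with $c,d_i\in\{1,2\}$, with output colour $c$ and $i$th input colour $d_i$. It also has two units $\mathbf 1_1,\mathbf 1_2$, with $\mathbf 1_c$ of output and input colour $c$. Its composition $(c;d_1\cdots d_n)\circ_i(e;f_1\cdots f_m)$ is defined iff $d_i=e$, and equals $(c;d_1\cdots d_{i-1}f_1\cdots f_md_{i+1}\cdots d_n)$. Geometrically, a bubble is a polygon with $n+1$ vertices whose base and edges are each blue or uncoloured, with no coloured diagonals: the output colour is $1$ iff the base is blue, and the $i$th input colour is $2$ iff the $i$th edge is blue. For a $2$-coloured collection $G$ (elements of arity $\ge2$ with output and input colours), $\mathcal F(G)$ is the free $2$-coloured operad: coloured syntax trees (planar rooted trees with nodes of arity $\ell$ labelled by elements of $G(\ell)$, such that the $i$th child of a node labelled $x$, if internal with label $y$, satisfies $\mathrm{In}_i(x)=\mathrm{Out}(y)$), composed by grafting. Here $\mathfrak c(x)$ is the corolla labelled $x$, the degree of a tree is its number of internal nodes, and $\mathfrak c(x)\circ_i\mathfrak c(y)$ is the tree obtained by grafting the corolla of $y$ on the $i$th leaf of the corolla of $x$. A presentation $(G,\leftrightarrow)$ of a coloured operad $\mathcal C$ means that $\mathcal C\cong\mathcal F(G)/\!\equiv$ with $\equiv$ the smallest coloured operadic congruence containing $\leftrightarrow$. *)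

theory Defs
  imports Main
begin

datatype col = C1 | C2

text \<open>An element of Bulle is a pair (output colour, list of input colours).
  Bubbles are those of arity at least 2; the unit of colour c is (c,[c]).\<close>
type_synonym bulle = "col \<times> col list"

definition Bulle :: "bulle set" where
  "Bulle = {(c, ds). 2 \<le> length ds} \<union> {(c, [c]) | c. True}"

text \<open>Partial composition (c;ds) o_i (e;fs), i 1-indexed; defined iff
  1 \<le> i \<le> length ds and ds!(i-1) = e.\<close>
definition bcomp :: "bulle \<Rightarrow> nat \<Rightarrow> bulle \<Rightarrow> bulle" where
  "bcomp x i y = (fst x, take (i - 1) (snd x) @ snd y @ drop i (snd x))"

definition G :: "bulle set" where
  "G = {(c, [d1, d2]) | c d1 d2. True}"

text \<open>Leaf a is a leaf of colour a (alone, the unit of colour a);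
  Node c d1 d2 l r is a node labelled (c;d1 d2) with children l, r.\<close>
datatype tree = Leaf col | Node col col col tree tree

fun out :: "tree \<Rightarrow> col" where
  "out (Leaf a) = a"
| "out (Node c d1 d2 l r) = c"

fun inputs :: "tree \<Rightarrow> col list" where
  "inputs (Leaf a) = [a]"
| "inputs (Node c d1 d2 l r) = inputs l @ inputs r"

fun nleaves :: "tree \<Rightarrow> nat" where
  "nleaves (Leaf a) = 1"
| "nleaves (Node c d1 d2 l r) = nleaves l + nleaves r"

fun deg :: "tree \<Rightarrow> nat" where
  "deg (Leaf a) = 0"
| "deg (Node c d1 d2 l r) = Suc (deg l + deg r)"

fun wf :: "tree \<Rightarrow> bool" where
  "wf (Leaf a) = True"
| "wf (Node c d1 d2 l r) = (wf l \<and> wf r \<and> out l = d1 \<and> out r = d2)"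

text \<open>Grafting s on the i-th leaf (1-indexed) of t: the operation t o_i s.\<close>
fun graft :: "tree \<Rightarrow> nat \<Rightarrow> tree \<Rightarrow> tree" where
  "graft (Leaf a) i s = (if i = 1 then s else Leaf a)"
| "graft (Node c d1 d2 l r) i s =
     (if i \<le> nleaves l then Node c d1 d2 (graft l i s) r
      else Node c d1 d2 l (graft r (i - nleaves l) s))"

definition corolla :: "col \<Rightarrow> col \<Rightarrow> col \<Rightarrow> tree" where
  "corolla c d1 d2 = Node c d1 d2 (Leaf d1) (Leaf d2)"

text \<open>Evaluation of a tree in Bulle (the morphism F(G) \<rightarrow> Bulle induced by c(g) \<mapsto> g).\<close>
definition eval :: "tree \<Rightarrow> bulle" where
  "eval t = (out t, inputs t)"

definition rclass :: "col \<Rightarrow> col \<Rightarrow> col \<Rightarrow> col \<Rightarrow> tree set" where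
  "rclass c d1 d2 d3 =
     {graft (corolla c e d3) 1 (corolla e d1 d2) | e. True} \<union>
     {graft (corolla c d1 e) 2 (corolla e d2 d3) | e. True}"

definition rel :: "tree \<Rightarrow> tree \<Rightarrow> bool" where
  "rel s t \<longleftrightarrow> (\<exists>c d1 d2 d3. s \<in> rclass c d1 d2 d3 \<and> t \<in> rclass c d1 d2 d3)
                \<or> (s = t \<and> wf s \<and> deg s = 2)"

inductive opcong :: "(tree \<Rightarrow> tree \<Rightarrow> bool) \<Rightarrow> tree \<Rightarrow> tree \<Rightarrow> bool" for R where
  gen: "R s t \<Longrightarrow> opcong R s t"
| refl: "wf t \<Longrightarrow> opcong R t t"
| sym: "opcong R s t \<Longrightarrow> opcong R t s"
| trans: "opcong R s t \<Longrightarrow> opcong R t u \<Longrightarrow> opcong R s u"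
| comp: "opcong R s s' \<Longrightarrow> opcong R t t' \<Longrightarrow> 1 \<le> i \<Longrightarrow> i \<le> nleaves s \<Longrightarrow>
         inputs s ! (i - 1) = out t \<Longrightarrow> opcong R (graft s i t) (graft s' i t')"

end

theory Submission
  imports Defs
begin

text \<open>Evaluation is compatible with grafting, and every generating relation relates trees
  with the same value, so the congruence is sound. Conversely, the degree-2 relations let
  one reassociate a grafting of two nodes and recolour the edge between them at will;
  hence every well-coloured tree is congruent to the right comb with its output colour,
  its inputs and all inner edges coloured 1. Two trees with the same value therefore
  share that normal form.\<close>

lemma nleaves_eq_length_inputs: "nleaves t = length (inputs t)"
  by (induction t) auto

lemma inputs_nonempty [simp]: "inputs t \<noteq> []"
  by (induction t) auto

lemma length_inputs_Node: "2 \<le> length (inputs (Node c d1 d2 l r))"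
  using inputs_nonempty[of l] inputs_nonempty[of r]
  by (cases "inputs l"; cases "inputs r") auto

lemma out_graft:
  "1 \<le> i \<Longrightarrow> i \<le> nleaves s \<Longrightarrow> inputs s ! (i - 1) = out t \<Longrightarrow> out (graft s i t) = out s"
  by (cases s) auto

lemma inputs_graft:
  "1 \<le> i \<Longrightarrow> i \<le> nleaves s
   \<Longrightarrow> inputs (graft s i t) = take (i - 1) (inputs s) @ inputs t @ drop i (inputs s)"
  by (induction s arbitrary: i) (auto simp: nleaves_eq_length_inputs)

lemma wf_graft:
  "wf s \<Longrightarrow> wf t \<Longrightarrow> 1 \<le> i \<Longrightarrow> i \<le> nleaves s \<Longrightarrow> inputs s ! (i - 1) = out t
   \<Longrightarrow> wf (graft s i t)"
proof (induction s arbitrary: i)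
  case (Node c d1 d2 l r)
  show ?case
  proof (cases "i \<le> nleaves l")
    case True
    with Node.prems have "i - 1 < length (inputs l)"
      by (simp add: nleaves_eq_length_inputs)
    with Node.prems have "inputs l ! (i - 1) = out t"
      by (simp add: nth_append)
    with Node True show ?thesis
      by (simp add: out_graft)
  next
    case False
    then have "\<not> i - 1 < length (inputs l)"
      by (simp add: nleaves_eq_length_inputs)
    with Node.prems have "inputs r ! (i - nleaves l - 1) = out t"
      by (simp add: nleaves_eq_length_inputs nth_append)
    with Node False show ?thesis
      by (simp add: out_graft)
  qed
qed auto

lemma eval_graft:
  "1 \<le> i \<Longrightarrow> i \<le> nleaves s \<Longrightarrow> inputs s ! (i - 1) = out t
   \<Longrightarrow> eval (graft s i t) = bcomp (eval s) i (eval t)"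
  by (simp add: eval_def bcomp_def out_graft inputs_graft)

lemma eval_in_Bulle: "eval t \<in> Bulle"
  using length_inputs_Node by (cases t) (auto simp: Bulle_def eval_def)

lemma opcong_imp_eval_eq:
  assumes "\<And>s t. R s t \<Longrightarrow> wf s \<and> wf t \<and> eval s = eval t"
  shows "opcong R s t \<Longrightarrow> wf s \<and> wf t \<and> eval s = eval t"
proof (induction rule: opcong.induct)
  case (comp s s' t t' i)
  then have "out s' = out s" "inputs s' = inputs s" "out t' = out t" "inputs t' = inputs t"
    by (auto simp: eval_def)
  with comp have "i \<le> nleaves s'" "inputs s' ! (i - 1) = out t'"
    by (auto simp: nleaves_eq_length_inputs)
  with comp show ?case
    by (simp add: wf_graft eval_graft)
qed (use assms in auto)

lemma rel_imp_eval_eq: "rel s t \<Longrightarrow> wf s \<and> wf t \<and> eval s = eval t"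
  unfolding rel_def rclass_def corolla_def eval_def by auto

lemma eval_rclass: "s \<in> rclass c d1 d2 d3 \<Longrightarrow> eval s = (c, [d1, d2, d3])"
  unfolding rclass_def corolla_def eval_def by auto

lemma deg_eq_0_iff: "deg t = 0 \<longleftrightarrow> t = Leaf (out t)"
  by (cases t) auto

lemma deg_2_in_rclass:
  assumes "wf t" "deg t = 2"
  shows "\<exists>c d1 d2 d3. t \<in> rclass c d1 d2 d3"
proof -
  obtain c d1 d2 l r where t: "t = Node c d1 d2 l r" and "deg l + deg r = 1"
    using assms(2) by (cases t) auto
  then consider "deg l = 0" "deg r = 1" | "deg l = 1" "deg r = 0"
    by linarith
  then show ?thesis
  proof cases
    case 1
    then obtain e y z where "r = corolla e y z" and "l = Leaf d1"
      using assms(1) t by (cases r) (auto simp: deg_eq_0_iff corolla_def)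
    with assms(1) t have "t = graft (corolla c d1 e) 2 (corolla e y z)"
      by (simp add: corolla_def)
    then show ?thesis
      unfolding rclass_def by blast
  next
    case 2
    then obtain e y z where "l = corolla e y z" and "r = Leaf d2"
      using assms(1) t by (cases l) (auto simp: deg_eq_0_iff corolla_def)
    with assms(1) t have "t = graft (corolla c e d2) 1 (corolla e y z)"
      by (simp add: corolla_def)
    then show ?thesis
      unfolding rclass_def by blast
  qed
qed

lemma rel_iff_eval_eq:
  assumes "wf s" "wf t" "deg s = 2" "deg t = 2"
  shows "rel s t \<longleftrightarrow> eval s = eval t"
proof
  assume "eval s = eval t"
  moreover obtain c d1 d2 d3 where s: "s \<in> rclass c d1 d2 d3"
    using deg_2_in_rclass assms by blast
  moreover obtain c' d1' d2' d3' where t: "t \<in> rclass c' d1' d2' d3'"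
    using deg_2_in_rclass assms by blast
  ultimately have "c' = c" "d1' = d1" "d2' = d2" "d3' = d3"
    using eval_rclass by auto
  with s t show "rel s t"
    unfolding rel_def by blast
qed (simp add: rel_imp_eval_eq)

declare opcong.trans [trans]

lemma opcong_Node:
  assumes "opcong R l l'" "opcong R r r'" "out l = d1" "out r = d2"
  shows "opcong R (Node c d1 d2 l r) (Node c d1 d2 l' r')"
proof -
  have "opcong R (corolla c d1 d2) (corolla c d1 d2)"
    by (rule opcong.refl) (simp add: corolla_def)
  from opcong.comp[OF this assms(2), of 2] assms
  have "opcong R (Node c d1 d2 (Leaf d1) r) (Node c d1 d2 (Leaf d1) r')"
    by (simp add: corolla_def)
  from opcong.comp[OF this assms(1), of 1] assms show ?thesis
    by simp
qed

lemma opcong_assoc: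
  assumes "wf A" "wf B" "wf C" "out A = x" "out B = y" "out C = z"
  shows "opcong rel (Node c e z (Node e x y A B) C) (Node c x e' A (Node e' y z B C))"
proof -
  have "rel (graft (corolla c e z) 1 (corolla e x y)) (graft (corolla c x e') 2 (corolla e' y z))"
    unfolding rel_def rclass_def by blast
  then have "opcong rel (Node c e z (Node e x y (Leaf x) (Leaf y)) (Leaf z))
                        (Node c x e' (Leaf x) (Node e' y z (Leaf y) (Leaf z)))"
    by (auto intro: opcong.gen simp: corolla_def)
  from opcong.comp[OF this opcong.refl[OF assms(3)], of 3] assms
  have "opcong rel (Node c e z (Node e x y (Leaf x) (Leaf y)) C)
                   (Node c x e' (Leaf x) (Node e' y z (Leaf y) C))"
    by simp
  from opcong.comp[OF this opcong.refl[OF assms(2)], of 2] assms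
  have "opcong rel (Node c e z (Node e x y (Leaf x) B) C)
                   (Node c x e' (Leaf x) (Node e' y z B C))"
    by simp
  from opcong.comp[OF this opcong.refl[OF assms(1)], of 1] assms show ?thesis
    by simp
qed

lemma opcong_recolour:
  assumes "wf A" "wf B" "wf C" "out A = x" "out B = y" "out C = z"
  shows "opcong rel (Node c x e A (Node e y z B C)) (Node c x e' A (Node e' y z B C))"
  using opcong_assoc[OF assms] by (meson opcong.sym opcong.trans)

fun comb :: "col \<Rightarrow> col list \<Rightarrow> tree" where
  "comb c [] = Leaf c"
| "comb c [a] = Leaf a"
| "comb c (a # b # xs) = Node c a (out (comb C1 (b # xs))) (Leaf a) (comb C1 (b # xs))"

lemma wf_comb: "wf (comb c xs)"
  by (induction c xs rule: comb.induct) auto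

lemma inputs_comb: "xs \<noteq> [] \<Longrightarrow> inputs (comb c xs) = xs"
  by (induction c xs rule: comb.induct) auto

lemma out_comb: "length xs \<noteq> 1 \<Longrightarrow> out (comb c xs) = c"
  by (induction c xs rule: comb.induct) auto

lemma comb_out_comb: "comb (out (comb c xs)) xs = comb c xs"
  by (cases "(c, xs)" rule: comb.cases) auto

lemma out_comb_out_inputs: "out (comb (out t) (inputs t)) = out t"
proof (cases t)
  case (Node c d1 d2 l r)
  then show ?thesis
    using length_inputs_Node[of c d1 d2 l r] by (simp add: out_comb)
qed simp

lemma opcong_recolour_comb:
  assumes "2 \<le> length ys"
  shows "opcong rel (Node c a e (Leaf a) (comb e ys)) (Node c a e' (Leaf a) (comb e' ys))"
proof -
  obtain b b' zs where "ys = b # b' # zs"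
    using assms by (auto simp: numeral_2_eq_2 Suc_le_length_iff)
  then show ?thesis
    using opcong_recolour[OF _ _ wf_comb] by simp
qed

lemma opcong_Node_comb:
  "xs \<noteq> [] \<Longrightarrow> ys \<noteq> [] \<Longrightarrow> out (comb d1 xs) = d1 \<Longrightarrow> out (comb d2 ys) = d2
   \<Longrightarrow> opcong rel (Node c d1 d2 (comb d1 xs) (comb d2 ys)) (comb c (xs @ ys))"
proof (induction xs arbitrary: c d1)
  case (Cons a xs)
  show ?case
  proof (cases xs)
    case Nil
    show ?thesis
    proof (cases "length ys = 1")
      case True
      with Cons.prems Nil show ?thesis
        by (auto simp: length_Suc_conv intro!: opcong.refl)
    next
      case False
      with Cons.prems have "2 \<le> length ys"
        by (cases ys) (auto simp: Suc_le_eq)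
      moreover from this have "out (comb C1 ys) = C1"
        by (simp add: out_comb)
      ultimately show ?thesis
        using Cons.prems Nil opcong_recolour_comb[of ys c a d2 C1] by (cases ys) auto
    qed
  next
    case (Cons a' xs')
    define X where "X = comb C1 (a' # xs')"
    define k where "k = out X"
    have "opcong rel (Node c d1 d2 (comb d1 (a # xs)) (comb d2 ys))
                     (Node c a C1 (Leaf a) (Node C1 k d2 X (comb d2 ys)))"
      using Cons Cons.prems opcong_assoc[of "Leaf a" X "comb d2 ys"]
      by (simp add: X_def k_def wf_comb)
    also have "opcong rel \<dots> (Node c a C1 (Leaf a) (comb C1 ((a' # xs') @ ys)))"
      using Cons.IH[of k C1] Cons Cons.prems
      by (intro opcong_Node opcong.refl) (auto simp: X_def k_def comb_out_comb)
    also have "\<dots> = comb c ((a # xs) @ ys)"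
      using Cons Cons.prems by (simp add: out_comb)
    finally show ?thesis .
  qed
qed simp

lemma opcong_comb: "wf t \<Longrightarrow> opcong rel t (comb (out t) (inputs t))"
proof (induction t)
  case (Leaf a)
  then show ?case
    by (auto intro: opcong.refl)
next
  case (Node c d1 d2 l r)
  have "opcong rel (Node c d1 d2 l r)
                   (Node c d1 d2 (comb d1 (inputs l)) (comb d2 (inputs r)))"
    using Node by (auto intro: opcong_Node)
  also have "opcong rel \<dots> (comb c (inputs l @ inputs r))"
    using Node.prems out_comb_out_inputs[of l] out_comb_out_inputs[of r]
    by (intro opcong_Node_comb) auto
  finally show ?case
    by simp
qed

lemma opcong_iff_eval_eq:
  assumes "wf s" "wf t"
  shows "opcong rel s t \<longleftrightarrow> eval s = eval t"
proof
  assume "eval s = eval t"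
  then have "comb (out s) (inputs s) = comb (out t) (inputs t)"
    by (simp add: eval_def)
  then show "opcong rel s t"
    using opcong_comb assms by (metis opcong.sym opcong.trans)
qed (use opcong_imp_eval_eq rel_imp_eval_eq in blast)

lemma eval_wf_image: "eval ` {t. wf t} = Bulle"
proof
  show "Bulle \<subseteq> eval ` {t. wf t}"
  proof
    fix x assume "x \<in> Bulle"
    then obtain c ds where x: "x = (c, ds)" and "2 \<le> length ds \<or> ds = [c]"
      unfolding Bulle_def by auto
    moreover from this have "ds \<noteq> []"
      by auto
    ultimately have "x = eval (comb c ds)"
      by (auto simp: eval_def inputs_comb out_comb)
    then show "x \<in> eval ` {t. wf t}"
      using wf_comb by blast
  qed
qed (use eval_in_Bulle in blast)

theorem theorem2p5:
  shows "(\<forall>s t. wf s \<and> wf t \<and> deg s = 2 \<and> deg t = 2 \<longrightarrow> (rel s t \<longleftrightarrow> eval s = eval t))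
       \<and> (\<forall>s t. wf s \<and> wf t \<longrightarrow> (opcong rel s t \<longleftrightarrow> eval s = eval t))
       \<and> eval ` {t. wf t} = Bulle
       \<and> (\<forall>s t i. wf s \<and> wf t \<and> 1 \<le> i \<and> i \<le> nleaves s \<and> inputs s ! (i - 1) = out t
              \<longrightarrow> eval (graft s i t) = bcomp (eval s) i (eval t))
       \<and> (\<forall>c d1 d2. (c, [d1, d2]) \<in> G \<and> eval (corolla c d1 d2) = (c, [d1, d2]))"
  using rel_iff_eval_eq opcong_iff_eval_eq eval_wf_image eval_graft
  by (auto simp: G_def eval_def corolla_def)

end
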